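(* Let $\mathbb{F}_q$ be a finite field, $n\geq 1$, and let $k_1,\dots,k_n$ be nonnegative integers. For $A\in Mat_{n\times n}(\mathbb{F}_q[x])$ write $A=\sum_{d\geq 0}A_d x^d$ with $A_d\in Mat_{n\times n}(\mathbb{F}_q)$. Then \[\#\{A=(a_{i,j})\in GL_n(\mathbb{F}_q[x]) : \deg(a_{i,j})\leq k_j \text{ for all } 1\leq i,j\leq n,\ A_0=I_n\}=q^{(n-1)\sum_{1\leq i\leq n}k_i}.\]
   Context: $GL_n(\mathbb{F}_q[x])$ denotes the invertible $n\times n$ matrices over $\mathbb{F}_q[x]$ (determinant a nonzero constant). The zero polynomial is regarded as having degree $\leq k_j$ for every $k_j$. $A_0$ is the constant-term matrix of $A$. *)

theory Defs
  imports "HOL-Analysis.Analysis" "HOL-Computational_Algebra.Polynomial"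
begin

end

theory Submission
  imports Defs
begin

(* Write T(A) for the matrix whose column j holds the coefficients of x^(k_j) in column j of A.
   The coefficient of x^(\<Sum> k_j) in det A is det T(A); since invertibility together with
   A(0) = I forces det A = 1, T(A) is singular as soon as \<Sum> k_j > 0.

   Let H(k, S) consist of the matrices whose columns of T(A) indexed by S are independent.
   Adding to S an index j with maximal bound k_j, the matrices that lose independence are those
   with a kernel vector e_j + v, v supported on S.  For each such v, adding
   \<Sum>_c v_c x^(k_j - k_c) times column c to column j maps them bijectively onto those with
   T(A) e_j = 0, that is, onto H(k - e_j, S) (empty if k_j = 0).  Hence
   |H(k, S)| = |H(k, S + j)| + q^|S| |H(k - e_j, S)|, and induction on \<Sum> k_j gives
   |H(k, S)| = q^((n-1) \<Sum> k_j) \<Prod>_(u<s) (1 - q^(u+z-(n-1))), where s and z count the m \<in> S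
   with k_m > 0 and k_m = 0.  The theorem is the case S = {}. *)

section \<open>Adjugates and transvections over commutative rings\<close>

lemma det_replace_row_lincomb:
  fixes A :: "'a::comm_ring_1^'n^'n"
  shows "det (\<chi> r. if r = k then (\<Sum>c\<in>UNIV. x c *s row c A) else row r A) = x k * det A"
proof -
  have "det (\<chi> r. if r = k then (\<Sum>c\<in>UNIV. x c *s row c A) else row r A)
      = (\<Sum>c\<in>UNIV. x c * det (\<chi> r. if r = k then row c A else row r A))"
    by (simp add: det_linear_row_sum det_row_mul)
  also have "\<dots> = (\<Sum>c\<in>UNIV. if c = k then x k * det A else 0)"
  proof (rule sum.cong)
    fix c
    show "x c * det (\<chi> r. if r = k then row c A else row r A) = (if c = k then x k * det A else 0)"
    proof (cases "c = k")
      case True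
      then have "(\<chi> r. if r = k then row c A else row r A) = A"
        by (simp add: vec_eq_iff row_def)
      with True show ?thesis by simp
    next
      case False
      then have "det (\<chi> r. if r = k then row c A else row r A) = 0"
        by (intro det_identical_rows[of c k]) (auto simp: row_def vec_eq_iff)
      with False show ?thesis by simp
    qed
  qed simp
  finally show ?thesis by simp
qed

definition adjugate :: "'a::comm_ring_1^'n^'n \<Rightarrow> 'a^'n^'n" where
  "adjugate A = (\<chi> j k. det (\<chi> r. if r = k then axis j 1 else row r A))"

lemma matrix_mul_adjugate:
  fixes A :: "'a::comm_ring_1^'n^'n"
  shows "A ** adjugate A = mat (det A)"
proof -
  have "(A ** adjugate A) $ i $ k = mat (det A) $ i $ k" for i k
  proof -
    have "(A ** adjugate A) $ i $ k = (\<Sum>j\<in>UNIV. det (\<chi> r. if r = k then A$i$j *s axis j 1 else row r A))"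
      by (simp add: matrix_matrix_mult_def adjugate_def det_row_mul)
    also have "\<dots> = det (\<chi> r. if r = k then (\<Sum>j\<in>UNIV. A$i$j *s axis j 1) else row r A)"
      by (rule det_linear_row_sum[symmetric]) simp
    also have "(\<Sum>j\<in>UNIV. A$i$j *s axis j (1::'a)) = (\<Sum>c\<in>UNIV. (if c = i then 1 else 0) *s row c A)"
      by (simp add: vec_eq_iff axis_def row_def sum_component
          if_distrib[of "\<lambda>x. x * _"] if_distrib[of "\<lambda>x. _ * x"] cong: if_cong)
    also have "det (\<chi> r. if r = k then \<dots> else row r A) = mat (det A) $ i $ k"
      by (simp only: det_replace_row_lincomb) (simp add: mat_def)
    finally show ?thesis .
  qed
  then show ?thesis by (simp add: vec_eq_iff)
qed

lemma mat_mul_mat: "mat a ** mat b = (mat (a * b) :: 'a::semiring_1^'n^'n)"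
  by (simp add: vec_eq_iff matrix_matrix_mult_def mat_def
      if_distrib[of "\<lambda>x. x * _"] if_distrib[of "\<lambda>x. _ * x"] cong: if_cong)

lemma invertible_iff_det_dvd_1:
  fixes A :: "'a::comm_ring_1^'n^'n"
  shows "invertible A \<longleftrightarrow> det A dvd 1"
proof
  assume "invertible A"
  then obtain B where "A ** B = mat 1" by (auto simp: invertible_def)
  then have "det A * det B = 1" by (metis det_I det_mul)
  then show "det A dvd 1" by (metis dvdI)
next
  assume "det A dvd 1"
  then obtain e where e: "1 = det A * e" by (rule dvdE)
  define B where "B = adjugate A ** mat e"
  define C where "C = mat e ** transpose (adjugate (transpose A))"
  have "A ** B = (A ** adjugate A) ** mat e"
    by (simp add: B_def matrix_mul_assoc)
  also have "\<dots> = mat 1"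
    by (simp add: matrix_mul_adjugate mat_mul_mat e)
  finally have right: "A ** B = mat 1" .
  have "C ** A = mat e ** transpose (transpose A ** adjugate (transpose A))"
    by (simp add: C_def matrix_mul_assoc matrix_transpose_mul)
  also have "\<dots> = mat 1"
    by (simp add: matrix_mul_adjugate mat_mul_mat e mult.commute)
  finally have left: "C ** A = mat 1" .
  have "C = C ** (A ** B)" by (simp add: right)
  also have "\<dots> = B" by (simp add: matrix_mul_assoc left)
  finally have "C = B" .
  with left right show "invertible A"
    unfolding invertible_def by blast
qed

definition transvection :: "'n \<Rightarrow> 'a::comm_ring_1^'n \<Rightarrow> 'a^'n^'n" where
  "transvection j u = mat 1 + (\<chi> a b. if b = j then u$a else 0)"

lemma matrix_mul_transvection:
  "(A ** transvection j u) $ a $ b = A$a$b + (if b = j then (A *v u)$a else 0)"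
proof -
  have "A ** (\<chi> a b. if b = j then u$a else 0) = (\<chi> a b. if b = j then (A *v u)$a else 0)"
    by (auto simp: vec_eq_iff matrix_matrix_mult_def matrix_vector_mult_def)
  then show ?thesis by (simp add: transvection_def matrix_add_ldistrib)
qed

lemma transvection_mul_matrix:
  fixes B :: "'a::comm_ring_1^'m^'n"
  shows "(transvection j u ** B) $ a $ b = B$a$b + u$a * B$j$b"
proof -
  have "(mat 1 + X) ** B = B + X ** B" for X :: "'a^'n^'n"
    by (simp add: vec_eq_iff matrix_matrix_mult_def distrib_right sum.distrib mat_def
        if_distrib[of "\<lambda>x. x * _"] cong: if_cong)
  moreover have "(\<chi> a b. if b = j then u$a else 0) ** B = (\<chi> a b. u$a * B$j$b)"
    by (simp add: vec_eq_iff matrix_matrix_mult_def if_distrib[of "\<lambda>x. x * _"] cong: if_cong)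
  ultimately show ?thesis by (simp add: transvection_def)
qed

lemma transvection_mul_vector: "transvection j u *v y = y + y$j *s u"
proof -
  have "(\<chi> a b. if b = j then u$a else 0) *v y = y$j *s u"
    by (simp add: vec_eq_iff matrix_vector_mult_def if_distrib[of "\<lambda>x. _ * x"] mult.commute cong: if_cong)
  then show ?thesis by (simp add: transvection_def matrix_vector_mult_add_rdistrib)
qed

lemma transvection_mul_transvection:
  assumes "u'$j = 0"
  shows "transvection j u ** transvection j u' = transvection j (u + u')"
  using assms by (auto simp: vec_eq_iff transvection_mul_matrix) (auto simp: transvection_def mat_def)

lemma transvection_0 [simp]: "transvection j 0 = mat 1"
  by (simp add: transvection_def mat_def vec_eq_iff)

lemma det_transvection:
  assumes "u$j = 0"
  shows "det (transvection j u) = 1"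
proof -
  let ?x = "\<lambda>c. if c = j then 1 else u$c"
  have "transpose (transvection j u)
      = (\<chi> r. if r = j then (\<Sum>c\<in>UNIV. ?x c *s row c (mat 1)) else row r (mat 1))"
    using assms by (auto simp: vec_eq_iff transpose_def transvection_def row_def mat_def
        sum_component if_distrib[of "\<lambda>x. _ * x"] cong: if_cong)
  then have "det (transpose (transvection j u)) = 1"
    by (simp add: det_replace_row_lincomb)
  then show ?thesis by simp
qed

lemma transvection_mul_vector_eq_0_iff:
  assumes "w$j = 0"
  shows "transvection j w *v z = 0 \<longleftrightarrow> z = 0"
proof
  assume "transvection j w *v z = 0"
  then have "transvection j (- w) *v (transvection j w *v z) = 0" by simp
  then show "z = 0"
    using assms by (simp add: matrix_vector_mul_assoc transvection_mul_transvection)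
qed simp

section \<open>Independent columns\<close>

definition cols_indep :: "'a::semiring_1^'n^'m \<Rightarrow> 'n set \<Rightarrow> bool" where
  "cols_indep M S \<longleftrightarrow> (\<forall>y. (\<forall>m. m \<notin> S \<longrightarrow> y$m = 0) \<longrightarrow> M *v y = 0 \<longrightarrow> y = 0)"

lemma cols_indep_UNIV_imp_det_nonzero:
  fixes M :: "'a::field^'n^'n"
  assumes "cols_indep M UNIV"
  shows "det M \<noteq> 0"
proof -
  have "\<exists>B. B ** M = mat 1"
    using assms by (simp add: matrix_left_invertible_ker cols_indep_def)
  then obtain B where "B ** M = mat 1" ..
  then have "det B * det M = 1" by (metis det_I det_mul)
  then show ?thesis by auto
qed

lemma cols_indep_mono: "S \<subseteq> S' \<Longrightarrow> cols_indep M S' \<Longrightarrow> cols_indep M S"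
  unfolding cols_indep_def by blast

lemma not_cols_indep_insert_iff:
  fixes M :: "'a::field^'n^'m"
  assumes indep: "cols_indep M S" and jS: "j \<notin> S"
  shows "\<not> cols_indep M (insert j S) \<longleftrightarrow>
    (\<exists>v. (\<forall>m. m \<notin> S \<longrightarrow> v$m = 0) \<and> M *v (axis j 1 + v) = 0)"
proof
  assume "\<not> cols_indep M (insert j S)"
  then obtain y where supp: "\<forall>m. m \<notin> insert j S \<longrightarrow> y$m = 0" and ker: "M *v y = 0" and "y \<noteq> 0"
    by (auto simp: cols_indep_def)
  have yj: "y$j \<noteq> 0"
  proof
    assume "y$j = 0"
    then have "\<forall>m. m \<notin> S \<longrightarrow> y$m = 0" using supp by auto
    with indep ker \<open>y \<noteq> 0\<close> show False by (auto simp: cols_indep_def)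
  qed
  define v where "v = inverse (y$j) *s y - axis j 1"
  have "\<forall>m. m \<notin> S \<longrightarrow> v$m = 0" using supp yj by (auto simp: v_def axis_def)
  moreover have "M *v (axis j 1 + v) = 0" using ker by (simp add: v_def vector_scalar_commute)
  ultimately show "\<exists>v. (\<forall>m. m \<notin> S \<longrightarrow> v$m = 0) \<and> M *v (axis j 1 + v) = 0" by blast
next
  assume "\<exists>v. (\<forall>m. m \<notin> S \<longrightarrow> v$m = 0) \<and> M *v (axis j 1 + v) = 0"
  then obtain v where supp: "\<forall>m. m \<notin> S \<longrightarrow> v$m = 0" and ker: "M *v (axis j 1 + v) = 0" by blast
  have "(axis j 1 + v) $ j = 1" using supp jS by simp
  then have "axis j 1 + v \<noteq> 0" by (metis zero_index zero_neq_one)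
  moreover have "\<forall>m. m \<notin> insert j S \<longrightarrow> (axis j 1 + v)$m = 0" using supp by (simp add: axis_def)
  ultimately show "\<not> cols_indep M (insert j S)" using ker unfolding cols_indep_def by blast
qed

lemma cols_indep_kernel_unique:
  fixes M :: "'a::comm_ring_1^'n^'m"
  assumes "cols_indep M S" "\<forall>m. m \<notin> S \<longrightarrow> v$m = 0" "\<forall>m. m \<notin> S \<longrightarrow> v'$m = 0"
    and "M *v (x + v) = 0" "M *v (x + v') = 0"
  shows "v = v'"
proof -
  have "M *v (v - v') = M *v (x + v) - M *v (x + v')"
    by (simp add: matrix_vector_mult_diff_distrib matrix_vector_right_distrib)
  then have "M *v (v - v') = 0" using assms(4,5) by simp
  moreover have "\<forall>m. m \<notin> S \<longrightarrow> (v - v')$m = 0" using assms(2,3) by simp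
  ultimately have "v - v' = 0" using assms(1) unfolding cols_indep_def by blast
  then show ?thesis by simp
qed

lemma matrix_vector_mult_axis: "(M *v axis j 1) $ i = M $ i $ j"
  by (simp add: matrix_vector_mult_def axis_def if_distrib[of "\<lambda>x. _ * x"] cong: if_cong)

lemma finite_vecs_with_entries_in:
  assumes "finite F"
  shows "finite {v :: 'a^'n. \<forall>i. v$i \<in> F}"
proof -
  have "{v :: 'a^'n. \<forall>i. v$i \<in> F} \<subseteq> vec_lambda ` (UNIV \<rightarrow>\<^sub>E F)"
    by (auto intro: image_eqI[where x = "vec_nth v" for v])
  moreover have "finite (vec_lambda ` (UNIV \<rightarrow>\<^sub>E F) :: ('a^'n) set)"
    using assms by (intro finite_imageI finite_PiE) auto
  ultimately show ?thesis by (rule finite_subset)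
qed

lemma card_vecs_supported_on:
  "card {v :: 'a::{zero,finite}^'n. \<forall>m. m \<notin> S \<longrightarrow> v$m = 0} = CARD('a) ^ card S"
proof -
  let ?F = "\<lambda>m. if m \<in> S then UNIV else {0::'a}"
  have "{v :: 'a^'n. \<forall>m. m \<notin> S \<longrightarrow> v$m = 0} = vec_lambda ` (PiE UNIV ?F)"
    by (auto intro: image_eqI[where x = "vec_nth v" for v] split: if_splits)
  moreover have "inj_on vec_lambda (PiE UNIV ?F)"
    by (rule inj_onI) (simp add: vec_lambda_inject)
  moreover have "card (PiE UNIV ?F) = CARD('a) ^ card S"
    by (simp add: card_PiE if_distrib[of card] prod.If_cases)
  ultimately show ?thesis by (simp add: card_image)
qed

section \<open>Leading column coefficients of polynomial matrices\<close>

lemma coeff_0_det: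
  fixes A :: "'a::comm_ring_1 poly^'n^'n"
  shows "coeff (det A) 0 = det (map_matrix (\<lambda>p. coeff p 0) A)"
  by (simp add: det_def poly_0_coeff_0[symmetric] poly_sum poly_prod)

lemma map_matrix_coeff_0_mult:
  fixes A :: "'a::comm_ring_1 poly^'n^'m" and B :: "'a poly^'p^'n"
  shows "map_matrix (\<lambda>p. coeff p 0) (A ** B) = map_matrix (\<lambda>p. coeff p 0) A ** map_matrix (\<lambda>p. coeff p 0) B"
  by (simp add: vec_eq_iff matrix_matrix_mult_def coeff_sum coeff_mult_0)

lemma map_matrix_coeff_0_transvection:
  "map_matrix (\<lambda>p. coeff p 0) (transvection j u) = transvection j (\<chi> c. coeff (u$c) 0)"
  by (simp add: vec_eq_iff transvection_def mat_def)

lemma coeff_mult_degree_le: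
  fixes p q :: "'a::comm_semiring_1 poly"
  assumes "degree p \<le> a" "degree q \<le> b"
  shows "coeff (p * q) (a + b) = coeff p a * coeff q b"
proof (cases "degree p = a \<and> degree q = b")
  case True
  then show ?thesis by (metis coeff_mult_degree_sum)
next
  case False
  then have "degree (p * q) < a + b" using assms degree_mult_le[of p q] by linarith
  moreover have "coeff p a * coeff q b = 0" using False assms by (auto simp: coeff_eq_0)
  ultimately show ?thesis by (simp add: coeff_eq_0)
qed

lemma coeff_prod_degree_le:
  fixes f :: "'b \<Rightarrow> 'a::comm_semiring_1 poly"
  assumes "finite I" "\<And>i. i \<in> I \<Longrightarrow> degree (f i) \<le> d i"
  shows "coeff (\<Prod>i\<in>I. f i) (\<Sum>i\<in>I. d i) = (\<Prod>i\<in>I. coeff (f i) (d i))"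
  using assms
proof (induction I rule: finite_induct)
  case (insert x F)
  have "degree (\<Prod>i\<in>F. f i) \<le> (\<Sum>i\<in>F. d i)"
    using insert by (intro order.trans[OF degree_prod_sum_le] sum_mono) auto
  with insert show ?case by (simp add: coeff_mult_degree_le)
qed simp

lemma degree_le_diff_1_iff:
  fixes p :: "'a::zero poly"
  assumes "0 < n"
  shows "degree p \<le> n - 1 \<longleftrightarrow> degree p \<le> n \<and> coeff p n = 0"
proof
  assume *: "degree p \<le> n \<and> coeff p n = 0"
  then have "p = 0 \<or> degree p \<noteq> n" by auto
  with * assms show "degree p \<le> n - 1" by auto
qed (use assms coeff_eq_0[of p n] in auto)

definition col_lead_matrix :: "('n \<Rightarrow> nat) \<Rightarrow> 'a::zero poly^'n^'m \<Rightarrow> 'a^'n^'m" where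
  "col_lead_matrix k A = (\<chi> i j. coeff (A$i$j) (k j))"

lemma coeff_det_col_lead_matrix:
  fixes A :: "'a::comm_ring_1 poly^'n^'n"
  assumes "\<And>i j. degree (A$i$j) \<le> k j"
  shows "coeff (det A) (\<Sum>j\<in>UNIV. k j) = det (col_lead_matrix k A)"
proof -
  have "coeff (\<Prod>i\<in>UNIV. A$i$p i) (\<Sum>j\<in>UNIV. k j) = (\<Prod>i\<in>UNIV. col_lead_matrix k A $ i $ p i)"
    if "p permutes UNIV" for p
  proof -
    have "(\<Sum>j\<in>UNIV. k j) = (\<Sum>i\<in>UNIV. k (p i))"
      using sum.permute[OF that, of k] by simp
    then show ?thesis using assms by (simp add: coeff_prod_degree_le col_lead_matrix_def)
  qed
  then show ?thesis by (simp add: det_def coeff_sum of_int_poly)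
qed

lemma col_lead_matrix_mult_axis_eq_0_iff:
  "col_lead_matrix k A *v axis j 1 = 0 \<longleftrightarrow> (\<forall>i. coeff (A$i$j) (k j) = 0)"
  by (simp add: vec_eq_iff matrix_vector_mult_axis col_lead_matrix_def)

lemma finite_degree_le: "finite {p :: 'a::{zero,finite} poly. degree p \<le> d}"
proof -
  have "{p :: 'a poly. degree p \<le> d} \<subseteq> Poly ` {xs. set xs \<subseteq> UNIV \<and> length xs \<le> Suc d}"
  proof
    fix p :: "'a poly"
    assume "p \<in> {p. degree p \<le> d}"
    then have "length (coeffs p) \<le> Suc d"
      by (cases "p = 0") (auto simp: length_coeffs_degree)
    then show "p \<in> Poly ` {xs. set xs \<subseteq> UNIV \<and> length xs \<le> Suc d}"
      by (metis (mono_tags, lifting) Poly_coeffs image_eqI mem_Collect_eq subset_UNIV)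
  qed
  moreover have "finite (Poly ` {xs :: 'a list. set xs \<subseteq> UNIV \<and> length xs \<le> Suc d})"
    by (intro finite_imageI finite_lists_length_le) simp
  ultimately show ?thesis by (rule finite_subset)
qed

section \<open>Matrices with bounded column degrees and constant term I\<close>

definition poly_box :: "('n::finite \<Rightarrow> nat) \<Rightarrow> ('a::comm_ring_1 poly^'n^'n) set" where
  "poly_box k = {A. (\<forall>i j. degree (A$i$j) \<le> k j) \<and> map_matrix (\<lambda>p. coeff p 0) A = mat 1}"

definition SL_box :: "('n::finite \<Rightarrow> nat) \<Rightarrow> ('a::comm_ring_1 poly^'n^'n) set" where
  "SL_box k = {A \<in> poly_box k. det A = 1}"

lemma poly_boxD:
  assumes "A \<in> poly_box k"
  shows "degree (A$i$j) \<le> k j" and "coeff (A$i$j) 0 = mat 1 $ i $ j"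
  using assms by (auto simp: poly_box_def vec_eq_iff)

lemma invertible_iff_det_eq_1:
  fixes A :: "'a::field poly^'n^'n"
  assumes "map_matrix (\<lambda>p. coeff p 0) A = mat 1"
  shows "invertible A \<longleftrightarrow> det A = 1"
proof -
  have "coeff (det A) 0 = 1" using assms by (simp add: coeff_0_det)
  moreover have "det A dvd 1 \<Longrightarrow> \<exists>c. det A = [:c:]"
    by (auto simp: is_unit_poly_iff)
  ultimately have "det A dvd 1 \<longleftrightarrow> det A = 1"
    using one_pCons by force
  then show ?thesis by (simp add: invertible_iff_det_dvd_1)
qed

lemma finite_poly_box: "finite (poly_box k :: ('a::{comm_ring_1,finite} poly^'n^'n) set)"
proof -
  let ?P = "{p :: 'a poly. degree p \<le> Max (range k)}"
  have bound: "k j \<le> Max (range k)" for j by (rule Max_ge) auto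
  have "poly_box k \<subseteq> {A :: 'a poly^'n^'n. \<forall>i j. A$i$j \<in> ?P}"
  proof (intro subsetI CollectI allI)
    fix A :: "'a poly^'n^'n" and i j
    assume "A \<in> poly_box k"
    then show "degree (A$i$j) \<le> Max (range k)" using poly_boxD(1) bound le_trans by blast
  qed
  moreover have "finite {A :: 'a poly^'n^'n. \<forall>i j. A$i$j \<in> ?P}"
    using finite_vecs_with_entries_in[OF finite_vecs_with_entries_in[OF finite_degree_le]]
    by simp
  ultimately show ?thesis by (rule finite_subset)
qed

lemma SL_box_zero:
  assumes "\<And>j. k j = 0"
  shows "SL_box k = {mat 1 :: 'a::comm_ring_1 poly^'n::finite^'n}"
proof -
  have "A = mat 1" if A: "A \<in> poly_box k" for A :: "'a poly^'n^'n"
  proof -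
    have "A$i$j = mat 1 $ i $ j" for i j
    proof -
      have "A$i$j = [:coeff (A$i$j) 0:]"
        using poly_boxD(1)[OF A, of i j] assms by (metis degree_0_id le_zero_eq)
      also have "\<dots> = mat 1 $ i $ j"
        using poly_boxD(2)[OF A, of i j] by (simp add: mat_def one_pCons[symmetric])
      finally show ?thesis .
    qed
    then show ?thesis by (simp add: vec_eq_iff)
  qed
  moreover have "mat 1 \<in> poly_box k"
    by (simp add: poly_box_def vec_eq_iff mat_def)
  ultimately show ?thesis
    unfolding SL_box_def by (blast intro: det_I)
qed

section \<open>A column operation preserving the box\<close>

(* The constant left factor restores the constant term I after the column operation. *)
definition col_op :: "'n::finite \<Rightarrow> 'a::comm_ring_1 poly^'n \<Rightarrow> 'a poly^'n^'n \<Rightarrow> 'a poly^'n^'n" where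
  "col_op j u A = transvection j (- (\<chi> c. [:coeff (u$c) 0:])) ** (A ** transvection j u)"

lemma col_op_col_op_uminus:
  assumes "u$j = 0"
  shows "col_op j (- u) (col_op j u A) = A"
proof -
  let ?w = "\<chi> c. [:coeff (u$c) 0:]"
  have "(\<chi> c. [:coeff ((- u)$c) 0:]) = - ?w" by (simp add: vec_eq_iff)
  then have "col_op j (- u) (col_op j u A)
      = (transvection j ?w ** transvection j (- ?w)) ** A ** (transvection j u ** transvection j (- u))"
    by (simp add: col_op_def matrix_mul_assoc)
  also have "\<dots> = A"
    using assms by (simp add: transvection_mul_transvection)
  finally show ?thesis .
qed

lemma det_col_op:
  assumes "u$j = 0"
  shows "det (col_op j u A) = det A"
  using assms by (simp add: col_op_def det_mul det_transvection)

lemma col_op_poly_box: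
  assumes A: "A \<in> poly_box k" and uj: "u$j = 0"
    and fit: "\<And>c. u$c \<noteq> 0 \<Longrightarrow> k c + degree (u$c) \<le> k j"
  shows "col_op j u A \<in> poly_box k"
proof -
  let ?B = "A ** transvection j u"
  have "degree ((A *v u)$a) \<le> k j" for a
    unfolding matrix_vector_mult_def
  proof (simp, rule degree_sum_le)
    fix c
    show "degree (A$a$c * u$c) \<le> k j"
    proof (cases "u$c = 0")
      case False
      then show ?thesis using fit[OF False] poly_boxD(1)[OF A, of a c]
        by (intro order.trans[OF degree_mult_le]) simp
    qed simp
  qed simp
  then have deg_B: "degree (?B$a$b) \<le> k b" for a b
    using poly_boxD(1)[OF A, of a b]
    by (auto simp: matrix_mul_transvection intro: degree_add_le)
  have "degree (col_op j u A $ a $ b) \<le> k b" for a b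
    using deg_B[of a b] deg_B[of j b]
    by (auto simp: col_op_def transvection_mul_matrix intro!: degree_diff_le order.trans[OF degree_smult_le])
  moreover have "map_matrix (\<lambda>p. coeff p 0) (col_op j u A) = mat 1"
  proof -
    let ?w = "\<chi> c. coeff (u$c) 0"
    have "(\<chi> c. coeff ((- (\<chi> c. [:coeff (u$c) 0:]))$c) 0) = - ?w"
      by (simp add: vec_eq_iff)
    then have "map_matrix (\<lambda>p. coeff p 0) (col_op j u A)
        = transvection j (- ?w) ** (mat 1 ** transvection j ?w)"
      using A by (simp add: col_op_def poly_box_def map_matrix_coeff_0_mult
          map_matrix_coeff_0_transvection)
    also have "\<dots> = mat 1"
      using uj by (simp add: transvection_mul_transvection)
    finally show ?thesis .
  qed
  ultimately show ?thesis by (simp add: poly_box_def)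
qed

lemma col_lead_matrix_col_op:
  fixes A :: "'a::comm_ring_1 poly^'n::finite^'n"
  assumes deg: "\<And>a b. degree (A$a$b) \<le> k b"
    and fit: "\<And>c. u$c \<noteq> 0 \<Longrightarrow> k c + degree (u$c) \<le> k j"
  shows "col_lead_matrix k (col_op j u A)
    = transvection j (- (\<chi> c. coeff (u$c) 0))
      ** (col_lead_matrix k A ** transvection j (\<chi> c. coeff (u$c) (k j - k c)))"
proof -
  let ?T = "col_lead_matrix k A" and ?L = "\<chi> c. coeff (u$c) (k j - k c)"
  let ?B = "A ** transvection j u"
  have "coeff (A$a$c * u$c) (k j) = ?T$a$c * ?L$c" for a c
  proof (cases "u$c = 0")
    case False
    then have "k c \<le> k j" "degree (u$c) \<le> k j - k c" using fit by fastforce+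
    then have "coeff (A$a$c * u$c) (k c + (k j - k c)) = coeff (A$a$c) (k c) * coeff (u$c) (k j - k c)"
      using deg by (intro coeff_mult_degree_le)
    with \<open>k c \<le> k j\<close> show ?thesis by (simp add: col_lead_matrix_def)
  qed simp
  then have "coeff ((A *v u)$a) (k j) = (?T *v ?L)$a" for a
    by (simp add: matrix_vector_mult_def coeff_sum)
  then have B: "coeff (?B$a$b) (k b) = (?T ** transvection j ?L)$a$b" for a b
    by (simp add: matrix_mul_transvection col_lead_matrix_def)
  have "col_lead_matrix k (col_op j u A) $ a $ b
      = coeff (?B$a$b) (k b) - coeff (u$a) 0 * coeff (?B$j$b) (k b)" for a b
    by (simp add: col_op_def col_lead_matrix_def transvection_mul_matrix)
  then show ?thesis
    by (simp add: vec_eq_iff B transvection_mul_matrix)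
qed

lemma col_op_SL_box:
  assumes "A \<in> SL_box k" "u$j = 0" "\<And>c. u$c \<noteq> 0 \<Longrightarrow> k c + degree (u$c) \<le> k j"
  shows "col_op j u A \<in> SL_box k"
  using assms col_op_poly_box[of A k u j] by (simp add: SL_box_def det_col_op)

lemma col_lead_matrix_col_op_kernel:
  fixes A :: "'a::comm_ring_1 poly^'n::finite^'n"
  assumes deg: "\<And>a b. degree (A$a$b) \<le> k b" and uj: "u$j = 0"
    and fit: "\<And>c. u$c \<noteq> 0 \<Longrightarrow> k c + degree (u$c) \<le> k j"
  shows "col_lead_matrix k (col_op j u A) *v y = 0 \<longleftrightarrow>
    col_lead_matrix k A *v (y + y$j *s (\<chi> c. coeff (u$c) (k j - k c))) = 0"
proof -
  have "col_lead_matrix k (col_op j u A) *v y = transvection j (- (\<chi> c. coeff (u$c) 0))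
      *v (col_lead_matrix k A *v (transvection j (\<chi> c. coeff (u$c) (k j - k c)) *v y))"
    by (simp add: col_lead_matrix_col_op[OF deg fit] matrix_vector_mul_assoc)
  then show ?thesis
    using uj by (simp add: transvection_mul_vector_eq_0_iff) (simp add: transvection_mul_vector)
qed

definition SL_box_indep :: "('n::finite \<Rightarrow> nat) \<Rightarrow> 'n set \<Rightarrow> ('a::field poly^'n^'n) set" where
  "SL_box_indep k S = {A \<in> SL_box k. cols_indep (col_lead_matrix k A) S}"

lemma finite_SL_box_indep: "finite (SL_box_indep k S :: ('a::{field,finite} poly^'n^'n) set)"
  by (rule finite_subset[OF _ finite_poly_box]) (auto simp: SL_box_indep_def SL_box_def)

lemma SL_box_indep_empty: "SL_box_indep k {} = SL_box k"
  by (auto simp: SL_box_indep_def cols_indep_def vec_eq_iff)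

lemma SL_box_indep_UNIV:
  fixes k :: "'n::finite \<Rightarrow> nat"
  assumes "0 < (\<Sum>j\<in>UNIV. k j)"
  shows "SL_box_indep k UNIV = ({} :: ('a::field poly^'n^'n) set)"
proof -
  have "\<not> cols_indep (col_lead_matrix k A) UNIV" if A: "A \<in> SL_box k" for A :: "'a poly^'n^'n"
  proof -
    have "\<And>i j. degree (A$i$j) \<le> k j" using A by (simp add: SL_box_def poly_boxD(1))
    then have "det (col_lead_matrix k A) = coeff (det A) (\<Sum>j\<in>UNIV. k j)"
      by (rule coeff_det_col_lead_matrix[symmetric])
    also have "\<dots> = 0" using A assms by (simp add: SL_box_def del: sum_eq_0_iff)
    finally show ?thesis using cols_indep_UNIV_imp_det_nonzero by blast
  qed
  then show ?thesis by (auto simp: SL_box_indep_def)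
qed

lemma SL_box_indep_zero_degrees:
  assumes "\<And>j. k j = 0"
  shows "SL_box_indep k S = {mat 1 :: 'a::field poly^'n::finite^'n}"
proof -
  have "col_lead_matrix k (mat 1 :: 'a poly^'n^'n) = mat 1"
    by (simp add: col_lead_matrix_def assms vec_eq_iff mat_def)
  then have "cols_indep (col_lead_matrix k (mat 1 :: 'a poly^'n^'n)) S"
    by (simp add: cols_indep_def)
  then show ?thesis using SL_box_zero[of k, OF assms] by (auto simp: SL_box_indep_def)
qed

lemma SL_box_indep_kernel_axis_empty:
  assumes "k j = 0"
  shows "{A \<in> SL_box_indep k S. col_lead_matrix k A *v axis j (1::'a::field) = 0} = {}"
  using assms by (auto simp: col_lead_matrix_mult_axis_eq_0_iff SL_box_indep_def SL_box_def
      poly_boxD(2) mat_def)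

lemma SL_box_indep_kernel_axis:
  fixes k :: "'n::finite \<Rightarrow> nat"
  assumes kj: "0 < k j" and jS: "j \<notin> S"
  shows "{A \<in> SL_box_indep k S. col_lead_matrix k A *v axis j (1::'a::field) = 0}
    = SL_box_indep (k(j := k j - 1)) S"
proof -
  let ?k' = "k(j := k j - 1)"
  have box: "A \<in> poly_box k \<and> col_lead_matrix k A *v axis j 1 = 0 \<longleftrightarrow> A \<in> poly_box ?k'"
    for A :: "'a poly^'n^'n"
    using degree_le_diff_1_iff[OF kj]
    by (auto simp: poly_box_def col_lead_matrix_mult_axis_eq_0_iff)
  have "col_lead_matrix ?k' A *v y = col_lead_matrix k A *v y" if "y$j = 0" for A :: "'a poly^'n^'n" and y
    using that by (auto simp: vec_eq_iff matrix_vector_mult_def col_lead_matrix_def intro!: sum.cong)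
  then have "cols_indep (col_lead_matrix ?k' A) S \<longleftrightarrow> cols_indep (col_lead_matrix k A) S"
    for A :: "'a poly^'n^'n"
    using jS unfolding cols_indep_def by metis
  with box show ?thesis by (auto simp: SL_box_indep_def SL_box_def)
qed

lemma card_SL_box_indep_kernel_shift:
  fixes k :: "'n::finite \<Rightarrow> nat" and v :: "'a::field^'n"
  assumes jS: "j \<notin> S" and supp: "\<And>m. m \<notin> S \<Longrightarrow> v$m = 0" and kS: "\<And>m. m \<in> S \<Longrightarrow> k m \<le> k j"
  shows "card {A \<in> SL_box_indep k S. col_lead_matrix k A *v (axis j 1 + v) = 0}
       = card {A \<in> SL_box_indep k S. col_lead_matrix k A *v axis j (1::'a) = 0}"
    (is "card ?C = card ?D")
proof -
  \<comment> \<open>Column operation moving the kernel vector \<open>axis j 1 + v\<close> of the leading matrix to \<open>axis j 1\<close>.\<close>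
  define u where "u = (\<chi> c. monom (v$c) (k j - k c))"
  have uj: "u$j = 0" and uj': "(- u)$j = 0" using supp jS by (simp_all add: u_def)
  have fit: "k c + degree (u$c) \<le> k j" if "u$c \<noteq> 0" for c
  proof -
    have "c \<in> S" using that supp by (auto simp: u_def)
    then show ?thesis using kS[of c] degree_monom_le[of "v$c" "k j - k c"] by (simp add: u_def)
  qed
  have fit': "k c + degree ((- u)$c) \<le> k j" if "(- u)$c \<noteq> 0" for c
    using fit[of c] that by simp
  have lead: "(\<chi> c. coeff (u$c) (k j - k c)) = v" by (simp add: u_def vec_eq_iff)
  have kernel: "col_lead_matrix k (col_op j u A) *v y = 0 \<longleftrightarrow>
      col_lead_matrix k A *v (y + y$j *s v) = 0" if "A \<in> SL_box k" for A :: "'a poly^'n^'n" and y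
    using col_lead_matrix_col_op_kernel[OF _ uj fit, of A] that
    by (simp add: lead SL_box_def poly_boxD(1))
  have iff: "col_op j u A \<in> ?D \<longleftrightarrow> A \<in> ?C" if A: "A \<in> SL_box k" for A :: "'a poly^'n^'n"
  proof -
    have "cols_indep (col_lead_matrix k (col_op j u A)) S \<longleftrightarrow> cols_indep (col_lead_matrix k A) S"
      using kernel[OF A] jS by (auto simp: cols_indep_def)
    moreover have "col_lead_matrix k (col_op j u A) *v axis j 1 = 0
        \<longleftrightarrow> col_lead_matrix k A *v (axis j 1 + v) = 0"
      using kernel[OF A] by simp
    ultimately show ?thesis
      using A col_op_SL_box[OF A uj fit] by (simp add: SL_box_indep_def)
  qed
  have image: "col_op j u ` ?C = ?D"
  proof
    show "col_op j u ` ?C \<subseteq> ?D"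
    proof (rule image_subsetI)
      fix A assume A: "A \<in> ?C"
      then have "A \<in> SL_box k" by (simp add: SL_box_indep_def)
      from iff[OF this] A show "col_op j u A \<in> ?D" by blast
    qed
    show "?D \<subseteq> col_op j u ` ?C"
    proof
      fix B assume B: "B \<in> ?D"
      then have "B \<in> SL_box k" by (simp add: SL_box_indep_def)
      then have inv: "col_op j (- u) B \<in> SL_box k" by (rule col_op_SL_box[OF _ uj' fit'])
      have eq: "col_op j u (col_op j (- u) B) = B"
        using col_op_col_op_uminus[OF uj', of B] by simp
      with iff[OF inv] B have "col_op j (- u) B \<in> ?C" by simp
      with eq[symmetric] show "B \<in> col_op j u ` ?C" by (rule image_eqI)
    qed
  qed
  have "inj_on (col_op j u) ?C"
    by (rule inj_on_inverseI[where g = "col_op j (- u)"]) (rule col_op_col_op_uminus[OF uj])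
  then have "card (col_op j u ` ?C) = card ?C" by (rule card_image)
  then show ?thesis unfolding image by (rule sym)
qed

lemma card_SL_box_indep_insert:
  fixes k :: "'n::finite \<Rightarrow> nat"
  assumes jS: "j \<notin> S" and kS: "\<And>m. m \<in> S \<Longrightarrow> k m \<le> k j"
  shows "card (SL_box_indep k S :: ('a::{field,finite} poly^'n^'n) set)
    = card (SL_box_indep k (insert j S) :: ('a poly^'n^'n) set)
      + CARD('a) ^ card S * card {A \<in> SL_box_indep k S. col_lead_matrix k A *v axis j (1::'a) = 0}"
proof -
  let ?V = "{v :: 'a^'n. \<forall>m. m \<notin> S \<longrightarrow> v$m = 0}"
  let ?K = "\<lambda>v. {A \<in> SL_box_indep k S. col_lead_matrix k A *v (axis j 1 + v) = 0}"
  have split: "SL_box_indep k S = SL_box_indep k (insert j S) \<union> (\<Union>v\<in>?V. ?K v)"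
  proof -
    have "SL_box_indep k (insert j S) \<subseteq> SL_box_indep k S"
      using cols_indep_mono[of S "insert j S"] by (auto simp: SL_box_indep_def)
    moreover have "A \<in> SL_box_indep k S \<Longrightarrow> A \<notin> SL_box_indep k (insert j S) \<longleftrightarrow> A \<in> (\<Union>v\<in>?V. ?K v)" for A
      using not_cols_indep_insert_iff[OF _ jS, of "col_lead_matrix k A"]
      by (auto simp: SL_box_indep_def)
    ultimately show ?thesis by blast
  qed
  have disjoint: "SL_box_indep k (insert j S) \<inter> (\<Union>v\<in>?V. ?K v) = {}"
    using not_cols_indep_insert_iff[OF _ jS] by (fastforce simp: SL_box_indep_def)
  have "card (SL_box_indep k S :: ('a poly^'n^'n) set)
      = card (SL_box_indep k (insert j S) \<union> (\<Union>v\<in>?V. ?K v))"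
    using split by (rule arg_cong)
  also have "\<dots> = card (SL_box_indep k (insert j S) :: ('a poly^'n^'n) set) + card (\<Union>v\<in>?V. ?K v)"
  proof (rule card_Un_disjoint)
    show "finite (\<Union>v\<in>?V. ?K v)"
      by (rule rev_finite_subset[OF finite_SL_box_indep[of k S]]) auto
    show "SL_box_indep k (insert j S) \<inter> (\<Union>v\<in>?V. ?K v) = {}" by (rule disjoint)
  qed (rule finite_SL_box_indep)
  also have "card (\<Union>v\<in>?V. ?K v) = (\<Sum>v\<in>?V. card (?K v))"
  proof (rule card_UN_disjoint)
    show "\<forall>v\<in>?V. finite (?K v)" by (auto intro: rev_finite_subset[OF finite_SL_box_indep])
    show "\<forall>v\<in>?V. \<forall>v'\<in>?V. v \<noteq> v' \<longrightarrow> ?K v \<inter> ?K v' = {}"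
      using cols_indep_kernel_unique by (fastforce simp: SL_box_indep_def)
  qed simp
  also have "\<dots> = (\<Sum>v\<in>?V. card {A \<in> SL_box_indep k S. col_lead_matrix k A *v axis j (1::'a) = 0})"
  proof (rule sum.cong)
    fix v assume "v \<in> ?V"
    then show "card (?K v) = card {A \<in> SL_box_indep k S. col_lead_matrix k A *v axis j (1::'a) = 0}"
      by (intro card_SL_box_indep_kernel_shift jS kS) auto
  qed simp
  also have "\<dots> = CARD('a) ^ card S * card {A \<in> SL_box_indep k S. col_lead_matrix k A *v axis j (1::'a) = 0}"
    by (simp add: card_vecs_supported_on)
  finally show ?thesis .
qed

lemma card_pos_plus_card_zero:
  fixes k :: "'n \<Rightarrow> nat"
  assumes "finite S"
  shows "card {m \<in> S. 0 < k m} + card {m \<in> S. k m = 0} = card S"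
proof -
  have "card S = card ({m \<in> S. 0 < k m} \<union> {m \<in> S. k m = 0})"
    by (rule arg_cong[where f = card]) auto
  also have "\<dots> = card {m \<in> S. 0 < k m} + card {m \<in> S. k m = 0}"
    by (rule card_Un_disjoint) (use assms in auto)
  finally show ?thesis by simp
qed

definition indep_density :: "real \<Rightarrow> nat \<Rightarrow> ('n \<Rightarrow> nat) \<Rightarrow> 'n set \<Rightarrow> real" where
  "indep_density q N k S =
    (\<Prod>u < card {m \<in> S. 0 < k m}. 1 - q ^ (u + card {m \<in> S. k m = 0}) / q ^ (N - 1))"

lemma indep_density_no_pos:
  assumes "\<And>m. m \<in> S \<Longrightarrow> k m = 0"
  shows "indep_density q N k S = 1"
proof -
  have "{m \<in> S. 0 < k m} = {}" using assms by auto
  then have "card {m \<in> S. 0 < k m} = 0" by (metis card.empty)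
  then show ?thesis unfolding indep_density_def by simp
qed

lemma indep_density_empty [simp]: "indep_density q N k {} = 1"
  by (rule indep_density_no_pos) simp

lemma indep_density_fun_upd: "j \<notin> S \<Longrightarrow> indep_density q N (k(j := d)) S = indep_density q N k S"
proof -
  assume "j \<notin> S"
  then have "{m \<in> S. 0 < (k(j := d)) m} = {m \<in> S. 0 < k m}" "{m \<in> S. (k(j := d)) m = 0} = {m \<in> S. k m = 0}"
    by auto
  then show ?thesis by (simp add: indep_density_def)
qed

lemma indep_density_insert:
  assumes "finite S" "j \<notin> S" "0 < k j"
  shows "indep_density q N k (insert j S) = indep_density q N k S * (1 - q ^ card S / q ^ (N - 1))"
proof -
  have "{m \<in> insert j S. 0 < k m} = insert j {m \<in> S. 0 < k m}"
    "{m \<in> insert j S. k m = 0} = {m \<in> S. k m = 0}"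
    using assms by auto
  then show ?thesis
    using assms card_pos_plus_card_zero[OF assms(1), of k] by (simp add: indep_density_def)
qed

lemma indep_density_UNIV:
  fixes k :: "'n::finite \<Rightarrow> nat"
  assumes "0 < k j" "q \<noteq> 0"
  shows "indep_density q CARD('n) k UNIV = 0"
  unfolding indep_density_def
proof (rule prod_zero)
  let ?s = "card {m \<in> UNIV. 0 < k m}" and ?z = "card {m \<in> UNIV. k m = 0}"
  have "0 < ?s" using assms(1) by (auto simp: card_gt_0_iff)
  moreover have "?s + ?z = CARD('n)" by (rule card_pos_plus_card_zero) simp
  ultimately have "?s - 1 < ?s" "(?s - 1) + ?z = CARD('n) - 1" by linarith+
  then show "\<exists>u\<in>{..<?s}. 1 - q ^ (u + ?z) / q ^ (CARD('n) - 1) = 0"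
    using assms(2) by (intro bexI[of _ "?s - 1"]) simp_all
qed simp

lemma sum_fun_upd_diff_1:
  fixes k :: "'n::finite \<Rightarrow> nat"
  assumes "0 < k j"
  shows "(\<Sum>i\<in>UNIV. (k(j := k j - 1)) i) = (\<Sum>i\<in>UNIV. k i) - 1"
    and "0 < (\<Sum>i\<in>UNIV. k i)"
proof -
  have "k j \<le> (\<Sum>i\<in>UNIV. k i)" by (rule member_le_sum) simp_all
  then show "0 < (\<Sum>i\<in>UNIV. k i)" using assms by linarith
  show "(\<Sum>i\<in>UNIV. (k(j := k j - 1)) i) = (\<Sum>i\<in>UNIV. k i) - 1"
    using assms by (simp add: sum.remove[of UNIV j])
qed

lemma ranked_insert_invariant:
  fixes D :: "'a::finite set \<Rightarrow> 'b" and f :: "'a \<Rightarrow> 'c::linorder"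
  assumes "\<And>j S. j \<notin> S \<Longrightarrow> (\<And>m. m \<in> S \<Longrightarrow> f m \<le> f j) \<Longrightarrow> D (insert j S) = D S"
  shows "D S = D {}"
  using finite[of S]
proof (induction rule: finite_ranking_induct[where f = f])
  case (insert j S)
  then show ?case using assms[of j S] by (cases "j \<in> S") (simp_all add: insert_absorb)
qed simp

lemma card_SL_box_indep_insert_density:
  fixes k :: "'n::finite \<Rightarrow> nat"
  defines "q \<equiv> real CARD('a::{field,finite})" and "N \<equiv> CARD('n)"
  defines "c \<equiv> q ^ ((N - 1) * (\<Sum>i\<in>UNIV. k i))"
  assumes jS: "j \<notin> S" and kS: "\<And>m. m \<in> S \<Longrightarrow> k m \<le> k j"
    and lower: "0 < k j \<Longrightarrow> real (card (SL_box_indep (k(j := k j - 1)) S :: ('a poly^'n^'n) set))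
      = q ^ ((N - 1) * (\<Sum>i\<in>UNIV. (k(j := k j - 1)) i)) * indep_density q N (k(j := k j - 1)) S"
  shows "real (card (SL_box_indep k (insert j S) :: ('a poly^'n^'n) set)) - c * indep_density q N k (insert j S)
    = real (card (SL_box_indep k S :: ('a poly^'n^'n) set)) - c * indep_density q N k S"
proof (cases "k j = 0")
  case True
  then have "indep_density q N k (insert j S) = 1" "indep_density q N k S = 1"
    using kS by (auto intro!: indep_density_no_pos)
  then show ?thesis
    using card_SL_box_indep_insert[where 'a = 'a, of j S k, OF jS kS]
    by (simp add: SL_box_indep_kernel_axis_empty True)
next
  case False
  let ?K = "\<Sum>i\<in>UNIV. k i" and ?P = "indep_density q N k"
  let ?k' = "k(j := k j - 1)"
  have "(N - 1) * ?K = (N - 1) * (?K - 1) + (N - 1)"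
    using sum_fun_upd_diff_1(2)[of k j] False by (cases ?K) simp_all
  then have c: "c = q ^ ((N - 1) * (?K - 1)) * q ^ (N - 1)" by (simp only: c_def power_add)
  have lower': "real (card (SL_box_indep ?k' S :: ('a poly^'n^'n) set)) = q ^ ((N - 1) * (?K - 1)) * ?P S"
    using lower False jS sum_fun_upd_diff_1(1)[of k j] by (simp add: indep_density_fun_upd)
  have rec: "card (SL_box_indep k S :: ('a poly^'n^'n) set)
      = card (SL_box_indep k (insert j S) :: ('a poly^'n^'n) set)
        + CARD('a) ^ card S * card (SL_box_indep ?k' S :: ('a poly^'n^'n) set)"
    using card_SL_box_indep_insert[where 'a = 'a, of j S k, OF jS kS]
      SL_box_indep_kernel_axis[where 'a = 'a, of k j S] False jS
    by simp
  have "?P (insert j S) = ?P S * (1 - q ^ card S / q ^ (N - 1))"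
    using False jS by (simp add: indep_density_insert)
  then have "c * (?P S - ?P (insert j S))
      = q ^ ((N - 1) * (?K - 1)) * q ^ (N - 1) * (?P S - ?P S * (1 - q ^ card S / q ^ (N - 1)))"
    by (simp only: c)
  also have "\<dots> = q ^ card S * (q ^ ((N - 1) * (?K - 1)) * ?P S)"
    by (simp add: q_def field_simps)
  finally show ?thesis using lower' rec by (simp add: q_def algebra_simps)
qed

lemma card_SL_box_indep:
  fixes k :: "'n::finite \<Rightarrow> nat"
  shows "real (card (SL_box_indep k S :: ('a::{field,finite} poly^'n^'n) set))
    = real CARD('a) ^ ((CARD('n) - 1) * (\<Sum>j\<in>UNIV. k j)) * indep_density (real CARD('a)) CARD('n) k S"
proof (induction "\<Sum>j\<in>UNIV. k j" arbitrary: k S rule: less_induct)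
  case less
  let ?c = "real CARD('a) ^ ((CARD('n) - 1) * (\<Sum>j\<in>UNIV. k j))"
  let ?D = "\<lambda>S. real (card (SL_box_indep k S :: ('a poly^'n^'n) set))
    - ?c * indep_density (real CARD('a)) CARD('n) k S"
  show ?case
  proof (cases "\<forall>j. k j = 0")
    case True
    then show ?thesis by (simp add: SL_box_indep_zero_degrees indep_density_no_pos)
  next
    case False
    then obtain j where j: "0 < k j" by auto
    have invariant: "?D T = ?D {}" for T
    proof (rule ranked_insert_invariant[where f = k])
      fix j S assume "j \<notin> S" "\<And>m. m \<in> S \<Longrightarrow> k m \<le> k j"
      then show "?D (insert j S) = ?D S"
        using sum_fun_upd_diff_1[of k j] by (intro card_SL_box_indep_insert_density less) simp_all
    qed
    \<comment> \<open>\<open>?D {}\<close> is not known in advance; it is pinned down at \<open>UNIV\<close>, where both terms vanish.\<close>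
    have "?D UNIV = 0"
      using j sum_fun_upd_diff_1(2)[of k j] by (simp add: SL_box_indep_UNIV indep_density_UNIV)
    then show ?thesis using invariant[of S] invariant[of UNIV] by simp
  qed
qed

theorem mainTheorem3:
  fixes k :: "'n::finite \<Rightarrow> nat"
  shows "card {A :: ('a::{field,finite}) poly ^'n^'n.
            invertible A \<and>
            (\<forall>i j. degree (A $ i $ j) \<le> k j) \<and>
            (\<chi> i j. coeff (A $ i $ j) 0) = mat 1}
         = CARD('a) ^ ((CARD('n) - 1) * (\<Sum>i\<in>UNIV. k i))"
proof -
  have "{A :: 'a poly ^'n^'n. invertible A \<and> (\<forall>i j. degree (A $ i $ j) \<le> k j) \<and>
      (\<chi> i j. coeff (A $ i $ j) 0) = mat 1} = SL_box k"
    using invertible_iff_det_eq_1 by (auto simp: SL_box_def poly_box_def map_matrix_def)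
  moreover have "real (card (SL_box k :: ('a poly^'n^'n) set)) = real CARD('a) ^ ((CARD('n) - 1) * (\<Sum>i\<in>UNIV. k i))"
    using card_SL_box_indep[where 'a = 'a, of k "{}"] by (simp add: SL_box_indep_empty)
  ultimately show ?thesis by (metis of_nat_eq_iff of_nat_power)
qed

end
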